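(* Let $n\geq 2$, $N=\binom{n}{2}$ and $q\geq N$. For $j=1,\dots,q$ let $L^j$ be an $n\times 2$ matrix whose $2n$ entries are independent indeterminates (distinct matrices using disjoint sets of indeterminates). For $i=1,\dots,N$ let $p^i(L^j)$ denote the $i$-th $2\times 2$ minor of $L^j$ (the minors indexed by the $N$ pairs of rows in a fixed order). Form the $N\times q$ matrix with entries $p^i(L^j)$. Then the determinant of any $N\times N$ submatrix of this matrix (obtained by choosing $N$ columns) is an irreducible polynomial.
   Context: Polynomials are over $\mathbb{R}$ in all the indeterminates appearing. *)

theory Defs
  imports "HOL-Library.Poly_Mapping" "HOL-Library.Product_Lexorder"
    "HOL-Computational_Algebra.Factorial_Ring" "Jordan_Normal_Form.Determinant"
begin

text \<open>Multivariate real polynomials in indeterminates indexed by triples (j, r, c):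
  the indeterminate X j r c is the (r,c) entry of the n x 2 matrix L^j
  (all indices 0-based).\<close>

type_synonym var = "nat \<times> nat \<times> nat"
type_synonym mpoly = "(var \<Rightarrow>\<^sub>0 nat) \<Rightarrow>\<^sub>0 real"

definition Var :: "nat \<Rightarrow> nat \<Rightarrow> nat \<Rightarrow> mpoly" where
  "Var j r c = Poly_Mapping.single (Poly_Mapping.single (j, r, c) 1) 1"

definition row_pairs :: "nat \<Rightarrow> (nat \<times> nat) list" where
  "row_pairs n = concat (map (\<lambda>a. map (\<lambda>b. (a, b)) [Suc a..<n]) [0..<n])"

definition pl_minor :: "nat \<Rightarrow> nat \<Rightarrow> nat \<Rightarrow> mpoly" where
  "pl_minor n i j = (let (a, b) = row_pairs n ! i in
      Var j a 0 * Var j b 1 - Var j a 1 * Var j b 0)"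

definition minor_submatrix :: "nat \<Rightarrow> (nat \<Rightarrow> nat) \<Rightarrow> mpoly mat" where
  "minor_submatrix n colsel = mat (n choose 2) (n choose 2) (\<lambda>(i, k). pl_minor n i (colsel k))"

end

theory Submission
  imports Defs
begin

text \<open>The determinant \<open>F\<close> has degree at most one in every indeterminate, so the two factors
  of a factorization \<open>F = g * h\<close> involve disjoint sets of indeterminates. Call \<open>y\<close> and \<open>z\<close>
  linked if some substitution that keeps only \<open>y\<close> and \<open>z\<close> turns \<open>F\<close> into
  \<open>c\<^sub>1 + c\<^sub>2 y + c\<^sub>3 z + c\<^sub>4 y z\<close> with \<open>c\<^sub>1 c\<^sub>4 \<noteq> c\<^sub>2 c\<^sub>3\<close>. Such a polynomial is not a
  product of a polynomial in \<open>y\<close> and one in \<open>z\<close>, so linked indeterminates lie in the same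
  factor. Specializing all but one or two of the selected matrices \<open>L\<^sup>j\<close> to unit blocks, so
  that the matrix of minors becomes a permutation matrix outside one or two columns, shows that the
  entries of each \<open>L\<^sup>j\<close> are linked with each other and, for \<open>n \<ge> 3\<close>, with the entries of every
  other \<open>L\<^sup>j\<close>. Hence all indeterminates of \<open>F\<close> lie in one factor and the other one is a
  nonzero constant.\<close>

abbreviation lookup :: "('a \<Rightarrow>\<^sub>0 'b::zero) \<Rightarrow> 'a \<Rightarrow> 'b" where
  "lookup \<equiv> Poly_Mapping.lookup"
abbreviation keys :: "('a \<Rightarrow>\<^sub>0 'b::zero) \<Rightarrow> 'a set" where
  "keys \<equiv> Poly_Mapping.keys"
abbreviation single :: "'a \<Rightarrow> 'b::zero \<Rightarrow> 'a \<Rightarrow>\<^sub>0 'b" where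
  "single \<equiv> Poly_Mapping.single"

type_synonym ('v, 'a) mpoly_ring = "('v \<Rightarrow>\<^sub>0 nat) \<Rightarrow>\<^sub>0 'a"

definition mconst :: "'a::zero \<Rightarrow> ('v, 'a) mpoly_ring" where
  "mconst c = single 0 c"

definition mvar :: "'v \<Rightarrow> ('v, 'a::zero_neq_one) mpoly_ring" where
  "mvar v = single (single v 1) 1"

definition mvars :: "('v, 'a::zero) mpoly_ring \<Rightarrow> 'v set" where
  "mvars p = (\<Union>m\<in>keys p. keys m)"

lemma Var_eq_mvar: "Var j r c = mvar (j, r, c)"
  by (simp add: Var_def mvar_def)

lemma mconst_0 [simp]: "mconst 0 = 0"
  by (simp add: mconst_def)

lemma mconst_1 [simp]: "mconst 1 = 1"
  by (simp add: mconst_def)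

lemma mconst_add: "mconst (a + b) = mconst a + mconst b"
  by (simp add: mconst_def single_add)

lemma mconst_uminus: "mconst (- a) = - mconst a"
  by (simp add: mconst_def single_uminus)

lemma mconst_mult: "mconst (a * b) = (mconst a * mconst b :: ('v, 'a::semiring_0) mpoly_ring)"
  by (simp add: mconst_def mult_single)

lemma mconst_eq_iff [simp]: "mconst a = mconst b \<longleftrightarrow> a = b"
  unfolding mconst_def by (rule inj_eq) (rule inj_single)

lemma poly_mapping_sum_single: "p = (\<Sum>m\<in>keys p. single m (lookup p m))"
  by (rule poly_mapping_eqI) (simp add: lookup_sum lookup_single when_def in_keys_iff)

lemma mult_sum_single:
  "(p::('v, 'a::comm_semiring_0) mpoly_ring) * q =
     (\<Sum>a\<in>keys p. \<Sum>b\<in>keys q. single (a + b) (lookup p a * lookup q b))"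
proof -
  have "p * q = (\<Sum>a\<in>keys p. single a (lookup p a)) * (\<Sum>b\<in>keys q. single b (lookup q b))"
    using poly_mapping_sum_single[of p] poly_mapping_sum_single[of q] by simp
  then show ?thesis
    by (simp add: sum_distrib_left sum_distrib_right mult_single) (rule sum.swap)
qed

definition msubst_monom ::
    "('v \<Rightarrow> ('w, 'a::comm_semiring_1) mpoly_ring) \<Rightarrow> ('v \<Rightarrow>\<^sub>0 nat) \<Rightarrow> ('w, 'a) mpoly_ring" where
  "msubst_monom \<phi> m = (\<Prod>v\<in>keys m. \<phi> v ^ lookup m v)"

definition msubst ::
    "('v \<Rightarrow> ('w, 'a::comm_semiring_1) mpoly_ring) \<Rightarrow> ('v, 'a) mpoly_ring \<Rightarrow> ('w, 'a) mpoly_ring" where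
  "msubst \<phi> p = (\<Sum>m\<in>keys p. mconst (lookup p m) * msubst_monom \<phi> m)"

lemma msubst_monom_superset:
  "finite S \<Longrightarrow> keys m \<subseteq> S \<Longrightarrow> msubst_monom \<phi> m = (\<Prod>v\<in>S. \<phi> v ^ lookup m v)"
  unfolding msubst_monom_def by (rule prod.mono_neutral_left) (auto simp: in_keys_iff)

lemma msubst_monom_add: "msubst_monom \<phi> (a + b) = msubst_monom \<phi> a * msubst_monom \<phi> b"
proof -
  let ?S = "keys a \<union> keys b"
  have "msubst_monom \<phi> (a + b) = (\<Prod>v\<in>?S. \<phi> v ^ lookup (a + b) v)"
    using keys_add[of a b] by (intro msubst_monom_superset) auto
  also have "\<dots> = (\<Prod>v\<in>?S. \<phi> v ^ lookup a v) * (\<Prod>v\<in>?S. \<phi> v ^ lookup b v)"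
    by (simp add: lookup_add power_add prod.distrib)
  also have "\<dots> = msubst_monom \<phi> a * msubst_monom \<phi> b"
    by (simp add: msubst_monom_superset[symmetric])
  finally show ?thesis .
qed

lemma msubst_superset:
  "finite S \<Longrightarrow> keys p \<subseteq> S \<Longrightarrow> msubst \<phi> p = (\<Sum>m\<in>S. mconst (lookup p m) * msubst_monom \<phi> m)"
  unfolding msubst_def by (rule sum.mono_neutral_left) (auto simp: in_keys_iff)

lemma msubst_single: "msubst \<phi> (single m c) = mconst c * msubst_monom \<phi> m"
  by (cases "c = 0") (simp_all add: msubst_def)

lemma msubst_add: "msubst \<phi> (p + q) = msubst \<phi> p + msubst \<phi> q"
proof -
  let ?S = "keys p \<union> keys q"
  have "msubst \<phi> (p + q) = (\<Sum>m\<in>?S. mconst (lookup (p + q) m) * msubst_monom \<phi> m)"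
    using keys_add[of p q] by (intro msubst_superset) auto
  also have "\<dots> = msubst \<phi> p + msubst \<phi> q"
    by (simp add: lookup_add mconst_add distrib_right sum.distrib msubst_superset[symmetric])
  finally show ?thesis .
qed

lemma msubst_0 [simp]: "msubst \<phi> 0 = 0"
  by (simp add: msubst_def)

lemma msubst_sum: "msubst \<phi> (sum f S) = (\<Sum>x\<in>S. msubst \<phi> (f x))"
  by (induction S rule: infinite_finite_induct) (simp_all add: msubst_add)

lemma msubst_mult: "msubst \<phi> (p * q) = msubst \<phi> p * msubst \<phi> q"
proof -
  have single: "msubst \<phi> (single (a + b) (x * y)) = msubst \<phi> (single a x) * msubst \<phi> (single b y)"
    for a b x y
    by (simp add: msubst_single msubst_monom_add mconst_mult mult_ac)
  have "msubst \<phi> (p * q) = (\<Sum>a\<in>keys p. \<Sum>b\<in>keys q.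
      msubst \<phi> (single a (lookup p a)) * msubst \<phi> (single b (lookup q b)))"
    by (subst mult_sum_single) (simp only: msubst_sum single)
  also have "\<dots> = msubst \<phi> (\<Sum>a\<in>keys p. single a (lookup p a)) *
      msubst \<phi> (\<Sum>b\<in>keys q. single b (lookup q b))"
    by (simp add: msubst_sum sum_distrib_left sum_distrib_right) (rule sum.swap)
  finally show ?thesis
    using poly_mapping_sum_single[of p] poly_mapping_sum_single[of q] by simp
qed

lemma msubst_one [simp]: "msubst \<phi> 1 = 1"
  using msubst_single[of \<phi> 0 1] by (simp add: msubst_monom_def)

lemma msubst_mvar [simp]: "msubst \<phi> (mvar v) = \<phi> v"
  by (simp add: mvar_def msubst_single msubst_monom_def)

lemma msubst_mconst [simp]: "msubst \<phi> (mconst c) = mconst c"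
  by (simp add: mconst_def msubst_single msubst_monom_def)

lemma comm_ring_hom_msubst: "comm_ring_hom (msubst (\<phi> :: 'v \<Rightarrow> ('w, 'a::comm_ring_1) mpoly_ring))"
  by unfold_locales (simp_all add: msubst_add msubst_mult)

lemma msubst_diff:
  "msubst \<phi> (p - q) = msubst \<phi> p - (msubst \<phi> q :: ('w, 'a::comm_ring_1) mpoly_ring)"
proof -
  have "msubst \<phi> (p - q) + msubst \<phi> q = msubst \<phi> p"
    by (metis msubst_add diff_add_cancel)
  then show ?thesis
    by (simp add: algebra_simps)
qed

lemma msubst_det:
  "msubst \<phi> (det A) = det (map_mat (msubst \<phi>) (A :: ('v, 'a::comm_ring_1) mpoly_ring mat))"
  by (rule comm_ring_hom.hom_det[OF comm_ring_hom_msubst, symmetric])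

lemma of_int_eq_mconst: "(of_int k :: ('v, 'a::comm_ring_1) mpoly_ring) = mconst (of_int k)"
  by (simp add: mconst_def)

lemma msubst_cong:
  assumes "\<And>v. v \<in> mvars p \<Longrightarrow> \<phi> v = \<psi> v"
  shows "msubst \<phi> p = msubst \<psi> p"
  unfolding msubst_def msubst_monom_def
  by (intro sum.cong arg_cong2[where f = "(*)"] prod.cong refl) (metis assms mvars_def UN_I)

definition filter_monoms ::
    "(('v \<Rightarrow>\<^sub>0 nat) \<Rightarrow> bool) \<Rightarrow> ('v, 'a::zero) mpoly_ring \<Rightarrow> ('v, 'a) mpoly_ring" where
  "filter_monoms P p = Abs_poly_mapping (\<lambda>m. if P m then lookup p m else 0)"

lemma lookup_filter_monoms: "lookup (filter_monoms P p) m = (if P m then lookup p m else 0)"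
proof -
  have "{m. (if P m then lookup p m else 0) \<noteq> 0} \<subseteq> keys p"
    by (auto simp: in_keys_iff split: if_splits)
  then have "finite {m. (if P m then lookup p m else 0) \<noteq> 0}"
    by (rule finite_subset) simp
  then show ?thesis
    unfolding filter_monoms_def by simp
qed

lemma keys_filter_monoms: "keys (filter_monoms P p) = {m \<in> keys p. P m}"
  by (auto simp: in_keys_iff lookup_filter_monoms split: if_splits)

lemma filter_monoms_add_filter_monoms_not:
  "filter_monoms P p + filter_monoms (\<lambda>m. \<not> P m) p = (p :: ('v, 'a::monoid_add) mpoly_ring)"
  by (rule poly_mapping_eqI) (simp add: lookup_add lookup_filter_monoms)

definition deg_le :: "'v \<Rightarrow> nat \<Rightarrow> ('v, 'a::zero) mpoly_ring \<Rightarrow> bool" where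
  "deg_le v d p \<longleftrightarrow> (\<forall>m\<in>keys p. lookup m v \<le> d)"

lemma deg_le_mono: "deg_le v d p \<Longrightarrow> d \<le> d' \<Longrightarrow> deg_le v d' p"
  unfolding deg_le_def by force

lemma deg_le_add: "deg_le v d p \<Longrightarrow> deg_le v d q \<Longrightarrow> deg_le v d (p + q)"
  unfolding deg_le_def using keys_add[of p q] by blast

lemma deg_le_diff:
  "deg_le v d p \<Longrightarrow> deg_le v d q \<Longrightarrow> deg_le v d (p - q :: ('v, 'a::ab_group_add) mpoly_ring)"
  unfolding deg_le_def using keys_add[of p "- q"] by auto

lemma deg_le_mult:
  "deg_le v d p \<Longrightarrow> deg_le v e q \<Longrightarrow> deg_le v (d + e) (p * q :: ('v, 'a::comm_semiring_0) mpoly_ring)"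
  unfolding deg_le_def using keys_mult[of p q] by (fastforce simp: lookup_add intro: add_mono)

lemma deg_le_sum: "(\<And>x. x \<in> S \<Longrightarrow> deg_le v d (f x)) \<Longrightarrow> deg_le v d (sum f S)"
  by (induction S rule: infinite_finite_induct) (auto simp: deg_le_add, auto simp: deg_le_def)

lemma deg_le_prod:
  "(\<And>x. x \<in> S \<Longrightarrow> deg_le v (d x) (f x)) \<Longrightarrow>
     deg_le v (sum d S) (prod f S :: ('v, 'a::comm_semiring_1) mpoly_ring)"
  by (induction S rule: infinite_finite_induct) (auto simp: deg_le_mult, auto simp: deg_le_def)

lemma deg_le_of_int: "deg_le v 0 (of_int k :: ('v, 'a::comm_ring_1) mpoly_ring)"
  unfolding deg_le_def by (simp flip: single_of_int)

lemma deg_le_mvar: "deg_le v (if w = v then 1 else 0) (mvar w)"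
  unfolding deg_le_def mvar_def by (simp add: lookup_single)

lemma deg_le_0_iff_notin_mvars: "deg_le v 0 p \<longleftrightarrow> v \<notin> mvars p"
  unfolding deg_le_def mvars_def by (auto simp: in_keys_iff)

abbreviation max_exponent :: "'v \<Rightarrow> ('v, 'a::zero) mpoly_ring \<Rightarrow> nat" where
  "max_exponent v p \<equiv> Max ((\<lambda>m. lookup m v) ` keys p)"

text \<open>The product of the parts of top degree in \<open>v\<close> is nonzero over a domain.\<close>

lemma max_exponent_mult:
  fixes p q :: "('v::linorder, 'a::idom) mpoly_ring"
  assumes "p \<noteq> 0" "q \<noteq> 0"
  shows "\<exists>m\<in>keys (p * q). lookup m v = max_exponent v p + max_exponent v q"
proof -
  define d where "d = max_exponent v p"
  define e where "e = max_exponent v q"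
  have le_d: "lookup m v \<le> d" if "m \<in> keys p" for m
    unfolding d_def using that by simp
  have le_e: "lookup m v \<le> e" if "m \<in> keys q" for m
    unfolding e_def using that by simp
  have "d \<in> (\<lambda>m. lookup m v) ` keys p" "e \<in> (\<lambda>m. lookup m v) ` keys q"
    unfolding d_def e_def using assms by (auto intro!: Max_in)
  then obtain a b where a: "a \<in> keys p" "lookup a v = d" and b: "b \<in> keys q" "lookup b v = e"
    by auto
  define p1 where "p1 = filter_monoms (\<lambda>m. lookup m v = d) p"
  define p0 where "p0 = filter_monoms (\<lambda>m. lookup m v \<noteq> d) p"
  define q1 where "q1 = filter_monoms (\<lambda>m. lookup m v = e) q"
  define q0 where "q0 = filter_monoms (\<lambda>m. lookup m v \<noteq> e) q"
  have "a \<in> keys p1" "b \<in> keys q1"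
    using a b by (simp_all add: p1_def q1_def keys_filter_monoms)
  then have "p1 * q1 \<noteq> 0"
    by auto
  then obtain m where m: "m \<in> keys (p1 * q1)"
    by (metis keys_eq_empty ex_in_conv)
  have m_deg: "lookup m v = d + e"
    using keys_mult[of p1 q1] m by (auto simp: p1_def q1_def keys_filter_monoms lookup_add)
  have "p = p1 + p0" "q = q1 + q0"
    unfolding p1_def p0_def q1_def q0_def by (simp_all add: filter_monoms_add_filter_monoms_not)
  then have "p * q = p1 * q1 + (p1 * q0 + p0 * q)"
    by (simp add: algebra_simps)
  moreover have "m \<notin> keys (p1 * q0)"
    using keys_mult[of p1 q0] m_deg le_e
    by (auto simp: p1_def q0_def keys_filter_monoms lookup_add)
  moreover have "m \<notin> keys (p0 * q)"
    using keys_mult[of p0 q] m_deg le_d le_e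
    by (fastforce simp: p0_def keys_filter_monoms lookup_add)
  ultimately have "lookup (p * q) m = lookup (p1 * q1) m"
    by (simp add: lookup_add in_keys_iff)
  then show ?thesis
    using m m_deg by (auto simp: in_keys_iff d_def e_def)
qed

lemma keys_mult_lookup_ge:
  fixes p q :: "('v::linorder, 'a::idom) mpoly_ring"
  assumes "a \<in> keys p" "b \<in> keys q"
  shows "\<exists>m\<in>keys (p * q). lookup a v + lookup b v \<le> lookup m v"
proof -
  have "p \<noteq> 0" "q \<noteq> 0"
    using assms by auto
  then obtain m where "m \<in> keys (p * q)" "lookup m v = max_exponent v p + max_exponent v q"
    using max_exponent_mult by blast
  moreover have "lookup a v \<le> max_exponent v p" "lookup b v \<le> max_exponent v q"
    using assms by simp_all
  ultimately show ?thesis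
    by (intro bexI[of _ m]) simp_all
qed

lemma mvars_add: "mvars (p + q) \<subseteq> mvars p \<union> mvars q"
  unfolding mvars_def using keys_add[of p q] by auto

lemma mvars_mult_subset: "mvars (p * q :: ('v, 'a::comm_semiring_0) mpoly_ring) \<subseteq> mvars p \<union> mvars q"
proof
  fix v
  assume "v \<in> mvars (p * q)"
  then obtain m where m: "m \<in> keys (p * q)" "v \<in> keys m"
    unfolding mvars_def by auto
  then obtain a b where "a \<in> keys p" "b \<in> keys q" "m = a + b"
    using keys_mult[of p q] by blast
  then show "v \<in> mvars p \<union> mvars q"
    using m keys_add[of a b] unfolding mvars_def by auto
qed

lemma mvars_mconst [simp]: "mvars (mconst c) = {}"
  by (simp add: mvars_def mconst_def)

lemma mvars_mvar [simp]: "mvars (mvar v) = {v}"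
  by (simp add: mvars_def mvar_def)

lemma mvars_1 [simp]: "mvars 1 = {}"
  by (simp add: mvars_def)

lemma mvars_0 [simp]: "mvars 0 = {}"
  by (simp add: mvars_def)

lemma mvars_power: "mvars (p ^ k :: ('v, 'a::comm_semiring_1) mpoly_ring) \<subseteq> mvars p"
proof (induction k)
  case (Suc k)
  then show ?case
    using mvars_mult_subset[of p "p ^ k"] by auto
qed simp

lemma mvars_prod:
  "mvars (prod f S :: ('v, 'a::comm_semiring_1) mpoly_ring) \<subseteq> (\<Union>x\<in>S. mvars (f x))"
proof (induction S rule: infinite_finite_induct)
  case (insert x F)
  then show ?case
    using mvars_mult_subset[of "f x" "prod f F"] by auto
qed simp_all

lemma mvars_sum: "mvars (sum f S) \<subseteq> (\<Union>x\<in>S. mvars (f x))"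
proof (induction S rule: infinite_finite_induct)
  case (insert x F)
  have "mvars (sum f (insert x F)) = mvars (f x + sum f F)"
    using insert.hyps by simp
  then show ?case
    using mvars_add[of "f x" "sum f F"] insert.IH by blast
qed simp_all

lemma mvars_msubst_monom: "mvars (msubst_monom \<phi> m) \<subseteq> (\<Union>v\<in>keys m. mvars (\<phi> v))"
proof -
  have "mvars (msubst_monom \<phi> m) \<subseteq> (\<Union>v\<in>keys m. mvars (\<phi> v ^ lookup m v))"
    unfolding msubst_monom_def by (rule mvars_prod)
  also have "\<dots> \<subseteq> (\<Union>v\<in>keys m. mvars (\<phi> v))"
    by (intro UN_mono subset_refl mvars_power)
  finally show ?thesis .
qed

lemma mvars_msubst: "mvars (msubst \<phi> p) \<subseteq> (\<Union>v\<in>mvars p. mvars (\<phi> v))"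
proof -
  have monom: "mvars (mconst c * msubst_monom \<phi> m) \<subseteq> (\<Union>v\<in>keys m. mvars (\<phi> v))" for c m
    using mvars_mult_subset[of "mconst c" "msubst_monom \<phi> m"] mvars_msubst_monom[of \<phi> m] by simp
  have "mvars (msubst \<phi> p) \<subseteq> (\<Union>m\<in>keys p. mvars (mconst (lookup p m) * msubst_monom \<phi> m))"
    unfolding msubst_def by (rule mvars_sum)
  also have "\<dots> \<subseteq> (\<Union>m\<in>keys p. \<Union>v\<in>keys m. mvars (\<phi> v))"
    by (rule UN_mono[OF subset_refl monom])
  also have "\<dots> = (\<Union>v\<in>mvars p. mvars (\<phi> v))"
    unfolding mvars_def[of p] by blast
  finally show ?thesis .
qed

lemma eq_mconst_if_mvars_empty:
  assumes "mvars p = {}"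
  shows "p = mconst (lookup p 0)"
  unfolding mconst_def
proof (rule poly_mapping_eqI)
  fix m
  show "lookup p m = lookup (single 0 (lookup p 0)) m"
  proof (cases "m = 0")
    case False
    have "m \<notin> keys p"
    proof
      assume "m \<in> keys p"
      then have "keys m = {}"
        using assms unfolding mvars_def by blast
      with False show False
        by simp
    qed
    with False show ?thesis
      by (simp add: in_keys_iff lookup_single)
  qed simp
qed

lemma unit_if_mvars_empty:
  fixes p :: "('v, 'a::field) mpoly_ring"
  assumes "mvars p = {}" "p \<noteq> 0"
  shows "p dvd 1"
proof -
  obtain c where p: "p = mconst c"
    using eq_mconst_if_mvars_empty[OF assms(1)] by blast
  with assms(2) have "c \<noteq> 0"
    by auto
  then have "p * mconst (1 / c) = 1"
    by (simp add: p flip: mconst_mult)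
  then show ?thesis
    by (rule dvdI[OF sym])
qed

lemma mvars_iff_lookup_pos:
  fixes p :: "('v, 'a::zero) mpoly_ring"
  shows "v \<in> mvars p \<longleftrightarrow> (\<exists>m\<in>keys p. 0 < lookup m v)"
proof -
  have "v \<in> keys m \<longleftrightarrow> 0 < lookup m v" for m :: "'v \<Rightarrow>\<^sub>0 nat"
    by (simp add: in_keys_iff)
  then show ?thesis
    unfolding mvars_def by blast
qed

lemma mvars_mult:
  fixes p q :: "('v::linorder, 'a::idom) mpoly_ring"
  assumes "p \<noteq> 0" "q \<noteq> 0"
  shows "mvars (p * q) = mvars p \<union> mvars q"
proof
  show "mvars p \<union> mvars q \<subseteq> mvars (p * q)"
  proof
    fix v
    assume v: "v \<in> mvars p \<union> mvars q"
    obtain a0 b0 where a0: "a0 \<in> keys p" and b0: "b0 \<in> keys q"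
      using assms by fastforce
    obtain a b where "a \<in> keys p" "b \<in> keys q" "0 < lookup a v + lookup b v"
    proof (cases "v \<in> mvars p")
      case True
      then obtain a where "a \<in> keys p" "0 < lookup a v"
        by (auto simp: mvars_iff_lookup_pos)
      then show ?thesis
        using that[of a b0] b0 by simp
    next
      case False
      then have "v \<in> mvars q"
        using v by blast
      then obtain b where "b \<in> keys q" "0 < lookup b v"
        by (auto simp: mvars_iff_lookup_pos)
      then show ?thesis
        using that[of a0 b] a0 by simp
    qed
    moreover from this obtain m where "m \<in> keys (p * q)" "lookup a v + lookup b v \<le> lookup m v"
      using keys_mult_lookup_ge by blast
    ultimately have "m \<in> keys (p * q)" "0 < lookup m v"
      by auto
    then show "v \<in> mvars (p * q)"
      unfolding mvars_iff_lookup_pos by blast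
  qed
qed (rule mvars_mult_subset)

lemma mvars_disjoint_if_deg_le_1:
  fixes p q :: "('v::linorder, 'a::idom) mpoly_ring"
  assumes "\<And>v. deg_le v 1 (p * q)"
  shows "mvars p \<inter> mvars q = {}"
proof (rule ccontr)
  assume "mvars p \<inter> mvars q \<noteq> {}"
  then obtain v where "v \<in> mvars p" "v \<in> mvars q"
    by blast
  then obtain a b where "a \<in> keys p" "0 < lookup a v" "b \<in> keys q" "0 < lookup b v"
    unfolding mvars_iff_lookup_pos by blast
  moreover from this obtain m where "m \<in> keys (p * q)" "lookup a v + lookup b v \<le> lookup m v"
    using keys_mult_lookup_ge by blast
  moreover have "lookup m v \<le> 1"
    using assms[of v] \<open>m \<in> keys (p * q)\<close> unfolding deg_le_def by blast
  ultimately show False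
    by linarith
qed

lemma mvars_msubst_subset:
  assumes "\<forall>v. mvars (\<phi> v) \<subseteq> {v} \<inter> K"
  shows "mvars (msubst \<phi> p) \<subseteq> mvars p \<inter> K"
  using mvars_msubst[of \<phi> p] assms by blast

subsection \<open>An irreducibility criterion for multilinear polynomials\<close>

text \<open>Evaluating at the four points of \<open>{0, 1}\<^sup>2\<close> shows that a product of a polynomial in
  \<open>y\<close> and a polynomial in \<open>z\<close> has a coefficient matrix of rank at most one.\<close>

lemma bilinear_product_degenerate:
  fixes p q :: "('v, 'a::comm_ring_1) mpoly_ring"
  assumes "mvars p \<subseteq> {y}" "mvars q \<subseteq> {z}" "y \<noteq> z"
    and pq: "p * q = mconst c1 + mconst c2 * mvar y + mconst c3 * mvar z + mconst c4 * (mvar y * mvar z)"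
  shows "c1 * c4 = c2 * c3"
proof -
  define ev :: "'a \<Rightarrow> 'a \<Rightarrow> ('v, 'a) mpoly_ring \<Rightarrow> ('v, 'a) mpoly_ring"
    where "ev s t = msubst (\<lambda>v. if v = y then mconst s else if v = z then mconst t else 0)" for s t
  have ev_mult: "ev s t (f * g) = ev s t f * ev s t g" for s t f g
    unfolding ev_def by (rule msubst_mult)
  have p: "ev s t p = ev s 0 p" for s t
    unfolding ev_def using assms(1) by (intro msubst_cong) auto
  have q: "ev s t q = ev 0 t q" for s t
    unfolding ev_def using assms(2,3) by (intro msubst_cong) auto
  define P where "P s = ev s 0 p" for s
  define Q where "Q t = ev 0 t q" for t
  have val: "P s * Q t = mconst (c1 + c2 * s + c3 * t + c4 * (s * t))" for s t
  proof -
    have "P s * Q t = ev s t (p * q)"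
      unfolding P_def Q_def ev_mult by (subst p, subst q) (rule refl)
    also have "\<dots> = mconst (c1 + c2 * s + c3 * t + c4 * (s * t))"
      unfolding pq ev_def using assms(3)
      by (simp add: msubst_add msubst_mult mconst_add mconst_mult)
    finally show ?thesis .
  qed
  have "mconst (c1 * (c1 + c2 + c3 + c4)) = (P 0 * Q 0) * (P 1 * Q 1)"
    by (simp add: val mconst_mult)
  also have "\<dots> = (P 1 * Q 0) * (P 0 * Q 1)"
    by (simp only: ac_simps)
  also have "\<dots> = mconst ((c1 + c2) * (c1 + c3))"
    by (simp add: val mconst_mult)
  finally have "c1 * (c1 + c2 + c3 + c4) = (c1 + c2) * (c1 + c3)"
    by simp
  moreover have "c1 * c4 - c2 * c3 = c1 * (c1 + c2 + c3 + c4) - (c1 + c2) * (c1 + c3)"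
    by (simp add: algebra_simps)
  ultimately show ?thesis
    by simp
qed

definition linked :: "('v, 'a::comm_ring_1) mpoly_ring \<Rightarrow> 'v \<Rightarrow> 'v \<Rightarrow> bool" where
  "linked F y z \<longleftrightarrow> y \<noteq> z \<and> (\<exists>\<phi> c1 c2 c3 c4. (\<forall>v. mvars (\<phi> v) \<subseteq> {v} \<inter> {y, z}) \<and>
     msubst \<phi> F = mconst c1 + mconst c2 * mvar y + mconst c3 * mvar z + mconst c4 * (mvar y * mvar z) \<and>
     c1 * c4 \<noteq> c2 * c3)"

lemma linkedI:
  fixes F :: "('v, 'a::idom) mpoly_ring"
  assumes "y \<noteq> z" "\<forall>v. mvars (\<phi> v) \<subseteq> {v} \<inter> {y, z}" "msubst \<phi> F = mconst s * P" "s \<noteq> 0"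
    and "P = mconst e + mconst f * mvar y + mconst g * mvar z + mconst h * (mvar y * mvar z)"
    and "e * h \<noteq> f * g"
  shows "linked F y z"
proof -
  have "msubst \<phi> F = mconst (s * e) + mconst (s * f) * mvar y + mconst (s * g) * mvar z +
      mconst (s * h) * (mvar y * mvar z)"
    using assms(3,5) by (simp add: mconst_mult algebra_simps)
  moreover have "(s * e) * (s * h) \<noteq> (s * f) * (s * g)"
  proof
    assume "(s * e) * (s * h) = (s * f) * (s * g)"
    then have "(s * s) * (e * h - f * g) = 0"
      by (simp add: algebra_simps)
    with assms(4,6) show False
      by simp
  qed
  ultimately show ?thesis
    unfolding linked_def using assms(1,2) by blast
qed

lemma linked_sym: "linked F y z \<Longrightarrow> linked F z y"
proof -
  assume "linked F y z"
  then obtain \<phi> c1 c2 c3 c4 where "y \<noteq> z" and \<phi>: "\<forall>v. mvars (\<phi> v) \<subseteq> {v} \<inter> {y, z}"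
    and c: "c1 * c4 \<noteq> c2 * c3"
    and eq: "msubst \<phi> F = mconst c1 + mconst c2 * mvar y + mconst c3 * mvar z + mconst c4 * (mvar y * mvar z)"
    unfolding linked_def by blast
  have "\<forall>v. mvars (\<phi> v) \<subseteq> {v} \<inter> {z, y}"
    using \<phi> by (simp add: insert_commute)
  moreover have "msubst \<phi> F = mconst c1 + mconst c3 * mvar z + mconst c2 * mvar y + mconst c4 * (mvar z * mvar y)"
    unfolding eq by (simp add: ac_simps)
  moreover have "c1 * c4 \<noteq> c3 * c2"
    using c by (simp add: mult.commute)
  ultimately show "linked F z y"
    unfolding linked_def using \<open>y \<noteq> z\<close> by blast
qed

lemma rtranclp_linked_sym: "(linked F)\<^sup>*\<^sup>* y z \<Longrightarrow> (linked F)\<^sup>*\<^sup>* z y"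
  by (induction rule: rtranclp_induct) (auto intro: converse_rtranclp_into_rtranclp linked_sym)

lemma linked_imp_mvars:
  fixes F :: "('v, 'a::comm_ring_1) mpoly_ring"
  assumes "linked F y z"
  shows "y \<in> mvars F"
proof (rule ccontr)
  assume y: "y \<notin> mvars F"
  obtain \<phi> c1 c2 c3 c4 where "y \<noteq> z" "\<forall>v. mvars (\<phi> v) \<subseteq> {v} \<inter> {y, z}" "c1 * c4 \<noteq> c2 * c3"
    and eq: "msubst \<phi> F = mconst c1 + mconst c2 * mvar y + mconst c3 * mvar z + mconst c4 * (mvar y * mvar z)"
    using assms unfolding linked_def by blast
  moreover have "mvars (msubst \<phi> F) \<subseteq> {z}"
    using mvars_msubst_subset[OF calculation(2), of F] y by blast
  ultimately show False
    using bilinear_product_degenerate[of 1 y "msubst \<phi> F" z] by simp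
qed

lemma linked_factor_same_side:
  fixes g h :: "('v, 'a::comm_ring_1) mpoly_ring"
  assumes "linked (g * h) y z" "mvars g \<inter> mvars h = {}"
  shows "y \<in> mvars g \<longleftrightarrow> z \<in> mvars g"
proof -
  obtain \<phi> c1 c2 c3 c4 where yz: "y \<noteq> z" and \<phi>: "\<forall>v. mvars (\<phi> v) \<subseteq> {v} \<inter> {y, z}"
    and c: "c1 * c4 \<noteq> c2 * c3"
    and eq: "msubst \<phi> (g * h) = mconst c1 + mconst c2 * mvar y + mconst c3 * mvar z + mconst c4 * (mvar y * mvar z)"
    using assms(1) unfolding linked_def by blast
  define G where "G = msubst \<phi> g"
  define H where "H = msubst \<phi> h"
  have GH: "G * H = mconst c1 + mconst c2 * mvar y + mconst c3 * mvar z + mconst c4 * (mvar y * mvar z)"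
    using eq by (simp add: G_def H_def msubst_mult)
  then have HG: "H * G = mconst c1 + mconst c2 * mvar y + mconst c3 * mvar z + mconst c4 * (mvar y * mvar z)"
    by (simp add: mult.commute)
  have "mvars G \<subseteq> mvars g \<inter> {y, z}" "mvars H \<subseteq> mvars h \<inter> {y, z}"
    unfolding G_def H_def by (rule mvars_msubst_subset[OF \<phi>])+
  moreover have "\<not> (mvars G \<subseteq> {y} \<and> mvars H \<subseteq> {z})"
    using bilinear_product_degenerate[OF _ _ yz GH] c by blast
  moreover have "\<not> (mvars H \<subseteq> {y} \<and> mvars G \<subseteq> {z})"
    using bilinear_product_degenerate[OF _ _ yz HG] c by blast
  ultimately show ?thesis
    using assms(2) yz by blast
qed

lemma not_unit_if_mvars_nonempty:
  fixes F :: "('v::linorder, 'a::idom) mpoly_ring"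
  assumes "mvars F \<noteq> {}"
  shows "\<not> F dvd 1"
proof
  assume "F dvd 1"
  then obtain u where u: "F * u = 1"
    by (metis dvdE)
  then have "F \<noteq> 0" "u \<noteq> 0"
    by auto
  then have "mvars (F * u) = mvars F \<union> mvars u"
    by (rule mvars_mult)
  with u assms show False
    by simp
qed

lemma factor_mvars_empty_if_linked_connected:
  fixes a b :: "('v::linorder, 'a::idom) mpoly_ring"
  assumes deg: "\<And>v. deg_le v 1 (a * b)"
    and connected: "\<And>v. v \<in> mvars (a * b) \<Longrightarrow> (linked (a * b))\<^sup>*\<^sup>* w v"
    and "a \<noteq> 0" "b \<noteq> 0"
  shows "mvars a = {} \<or> mvars b = {}"
proof -
  have vars: "mvars (a * b) = mvars a \<union> mvars b"
    using assms(3,4) by (rule mvars_mult)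
  have disjoint: "mvars a \<inter> mvars b = {}"
    using deg by (rule mvars_disjoint_if_deg_le_1)
  have side: "v \<in> mvars a \<longleftrightarrow> w \<in> mvars a" if "v \<in> mvars (a * b)" for v
    using connected[OF that]
  proof (induction rule: rtranclp_induct)
    case (step x y)
    then show ?case
      using linked_factor_same_side[OF _ disjoint, of x y] by simp
  qed simp
  show ?thesis
  proof (cases "w \<in> mvars a")
    case True
    then have "mvars b \<subseteq> mvars a"
      using side vars by blast
    with disjoint show ?thesis
      by blast
  next
    case False
    then have "mvars a = {}"
      using side vars by blast
    then show ?thesis ..
  qed
qed

lemma irreducible_if_linked_connected:
  fixes F :: "('v::linorder, 'a::field) mpoly_ring"
  assumes deg: "\<And>v. deg_le v 1 F"
    and w: "w \<in> mvars F"
    and connected: "\<And>v. v \<in> mvars F \<Longrightarrow> (linked F)\<^sup>*\<^sup>* w v"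
  shows "irreducible F"
proof (rule irreducibleI)
  show "F \<noteq> 0" "\<not> F dvd 1"
    using w not_unit_if_mvars_nonempty by auto
  fix a b
  assume F: "F = a * b"
  with \<open>F \<noteq> 0\<close> have "a \<noteq> 0" "b \<noteq> 0"
    by auto
  have "mvars a = {} \<or> mvars b = {}"
    using deg connected \<open>a \<noteq> 0\<close> \<open>b \<noteq> 0\<close> unfolding F
    by (rule factor_mvars_empty_if_linked_connected)
  with \<open>a \<noteq> 0\<close> \<open>b \<noteq> 0\<close> show "a dvd 1 \<or> b dvd 1"
    using unit_if_mvars_empty by blast
qed

lemma set_row_pairs: "set (row_pairs n) = {(a, b). a < b \<and> b < n}"
  by (auto simp: row_pairs_def image_iff)

lemma sum_diff_Suc_eq_choose_2: "(\<Sum>a<n. n - Suc a) = n choose 2"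
proof (induction n)
  case (Suc n)
  have "(\<Sum>a<Suc n. Suc n - Suc a) = n + (\<Sum>a<n. n - Suc a)"
    by (subst sum.lessThan_Suc_shift) simp
  also have "\<dots> = Suc n choose 2"
    using Suc by (simp add: numeral_2_eq_2)
  finally show ?case .
qed simp

lemma length_row_pairs: "length (row_pairs n) = n choose 2"
proof -
  have "length (row_pairs n) = (\<Sum>a\<leftarrow>[0..<n]. n - Suc a)"
    by (simp add: row_pairs_def length_concat o_def)
  also have "\<dots> = (\<Sum>a<n. n - Suc a)"
    by (simp add: sum_list_distinct_conv_sum_set atLeast0LessThan)
  finally show ?thesis
    by (simp add: sum_diff_Suc_eq_choose_2)
qed

lemma distinct_row_pairs: "distinct (row_pairs n)"
proof -
  have "x = y" if "map (Pair x) [Suc x..<n] = map (Pair y) [Suc y..<n]" "x < n" "y < n" for x y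
  proof (rule ccontr)
    assume "x \<noteq> y"
    have same: "set (map (Pair x) [Suc x..<n]) = set (map (Pair y) [Suc y..<n])"
      using that(1) by simp
    show False
    proof (cases "x < y")
      case True
      then have "(x, y) \<in> set (map (Pair x) [Suc x..<n])"
        using that(3) by simp
      then have "(x, y) \<in> set (map (Pair y) [Suc y..<n])"
        unfolding same .
      with \<open>x \<noteq> y\<close> show False
        by auto
    next
      case False
      then have "(y, x) \<in> set (map (Pair y) [Suc y..<n])"
        using that(2) \<open>x \<noteq> y\<close> by simp
      then have "(y, x) \<in> set (map (Pair x) [Suc x..<n])"
        unfolding same .
      with \<open>x \<noteq> y\<close> show False
        by auto
    qed
  qed
  then show ?thesis
    unfolding row_pairs_def by (intro distinct_concat) (auto simp: distinct_map inj_on_def)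
qed

lemma row_pairs_nth_less:
  assumes "i < n choose 2"
  shows "fst (row_pairs n ! i) < snd (row_pairs n ! i)" "snd (row_pairs n ! i) < n"
proof -
  have "row_pairs n ! i \<in> set (row_pairs n)"
    using assms by (simp add: length_row_pairs)
  then show "fst (row_pairs n ! i) < snd (row_pairs n ! i)" "snd (row_pairs n ! i) < n"
    by (auto simp: set_row_pairs)
qed

lemma row_pairs_index:
  assumes "a < b" "b < n"
  obtains i where "i < n choose 2" "row_pairs n ! i = (a, b)"
proof -
  have "(a, b) \<in> set (row_pairs n)"
    using assms by (simp add: set_row_pairs)
  then show ?thesis
    using that by (auto simp: in_set_conv_nth length_row_pairs)
qed

lemma row_pairs_nth_eq_iff:
  "i < n choose 2 \<Longrightarrow> j < n choose 2 \<Longrightarrow> row_pairs n ! i = row_pairs n ! j \<longleftrightarrow> i = j"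
  using distinct_row_pairs[of n] by (simp add: nth_eq_iff_index_eq length_row_pairs)

subsection \<open>Determinants of matrices that are almost permutation matrices\<close>

lemma permutes_eq_if_agree_but_one:
  assumes p: "p permutes S" and \<sigma>: "\<sigma> permutes S"
    and agree: "\<And>i. i \<in> S \<Longrightarrow> i \<noteq> Q \<Longrightarrow> p i = \<sigma> i"
  shows "p = \<sigma>"
proof (rule ext)
  have "p Q = \<sigma> Q"
  proof (rule ccontr)
    assume "p Q \<noteq> \<sigma> Q"
    then have "Q \<in> S"
      using permutes_not_in[OF p] permutes_not_in[OF \<sigma>] by fastforce
    then have "\<sigma> Q \<in> p ` S"
      using permutes_image[OF p] permutes_in_image[OF \<sigma>] by simp
    then obtain i where "i \<in> S" "\<sigma> Q = p i"
      by auto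
    with agree[of i] \<open>p Q \<noteq> \<sigma> Q\<close> have "\<sigma> Q = \<sigma> i" "i \<noteq> Q"
      by auto
    then show False
      by (simp add: permutes_inj[OF \<sigma>, THEN inj_eq])
  qed
  fix i
  show "p i = \<sigma> i"
    using agree \<open>p Q = \<sigma> Q\<close> permutes_not_in[OF p, of i] permutes_not_in[OF \<sigma>, of i]
    by (cases "i \<in> S"; cases "i = Q") auto
qed

lemma det_eq_single_term:
  fixes A :: "'a::comm_ring_1 mat"
  assumes A: "A \<in> carrier_mat N N" and \<sigma>: "\<sigma> permutes {0..<N}"
    and zero: "\<And>i j. i < N \<Longrightarrow> j < N \<Longrightarrow> i \<noteq> Q \<Longrightarrow> j \<noteq> \<sigma> i \<Longrightarrow> A $$ (i, j) = 0"
  shows "det A = signof \<sigma> * (\<Prod>i = 0..<N. A $$ (i, \<sigma> i))"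
proof -
  have "(\<Prod>i = 0..<N. A $$ (i, p i)) = 0" if p: "p permutes {0..<N}" and "p \<noteq> \<sigma>" for p
  proof -
    obtain i where "i < N" "i \<noteq> Q" "p i \<noteq> \<sigma> i"
      using permutes_eq_if_agree_but_one[OF p \<sigma>, of Q] \<open>p \<noteq> \<sigma>\<close> by fastforce
    moreover have "p i < N"
      using p \<open>i < N\<close> by (simp add: permutes_in_image)
    ultimately have "A $$ (i, p i) = 0"
      using zero by blast
    then show ?thesis
      using \<open>i < N\<close> by (intro prod_zero bexI[of _ i]) auto
  qed
  then have "det A = (\<Sum>p \<in> {p. p permutes {0..<N}}. if p = \<sigma> then signof p * (\<Prod>i = 0..<N. A $$ (i, p i)) else 0)"
    unfolding det_def'[OF A] by (intro sum.cong) auto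
  also have "\<dots> = signof \<sigma> * (\<Prod>i = 0..<N. A $$ (i, \<sigma> i))"
    using \<sigma> by (simp add: finite_permutations)
  finally show ?thesis .
qed

lemma det_eq_unit_columns_but_one:
  fixes A :: "'a::comm_ring_1 mat"
  assumes A: "A \<in> carrier_mat N N" and \<beta>: "\<beta> permutes {0..<N}" and k: "k < N"
    and unit: "\<And>i m. i < N \<Longrightarrow> m < N \<Longrightarrow> m \<noteq> k \<Longrightarrow> A $$ (i, m) = (if i = \<beta> m then 1 else 0)"
  shows "det A = signof \<beta> * A $$ (\<beta> k, k)"
proof -
  have \<beta>_less: "\<beta> m < N" if "m < N" for m
    using \<beta> that by (simp add: permutes_in_image)
  have "det A = det (transpose_mat A)"
    using A by (simp add: det_transpose)
  also have "\<dots> = signof \<beta> * (\<Prod>m = 0..<N. transpose_mat A $$ (m, \<beta> m))"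
    using A unit by (intro det_eq_single_term[OF _ \<beta>, where Q = k]) auto
  also have "(\<Prod>m = 0..<N. transpose_mat A $$ (m, \<beta> m)) = (\<Prod>m \<in> {0..<N}. A $$ (\<beta> m, m))"
    using A \<beta>_less by (intro prod.cong) auto
  also have "\<dots> = A $$ (\<beta> k, k) * (\<Prod>m \<in> {0..<N} - {k}. A $$ (\<beta> m, m))"
    using k by (intro prod.remove) auto
  also have "(\<Prod>m \<in> {0..<N} - {k}. A $$ (\<beta> m, m)) = 1"
    using unit \<beta>_less by (intro prod.neutral) auto
  finally show ?thesis
    by simp
qed

text \<open>Subtracting \<open>t\<close> times row \<open>k\<close> from row \<open>q\<close> turns column \<open>k\<close> into a unit column.\<close>

lemma det_eq_unit_columns_but_two:
  fixes A :: "'a::comm_ring_1 mat"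
  assumes A: "A \<in> carrier_mat N N" and \<beta>: "\<beta> permutes {0..<N}"
    and k: "k < N" and k': "k' < N" and q: "q < N" "q \<noteq> k"
    and \<beta>k: "\<beta> k = k" and \<beta>k': "\<beta> k' = q"
    and column_k: "\<And>i. i < N \<Longrightarrow> A $$ (i, k) = (if i = k then 1 else if i = q then t else 0)"
    and unit: "\<And>i m. i < N \<Longrightarrow> m < N \<Longrightarrow> m \<noteq> k \<Longrightarrow> m \<noteq> k' \<Longrightarrow> A $$ (i, m) = (if i = \<beta> m then 1 else 0)"
  shows "det A = signof \<beta> * (A $$ (q, k') - t * A $$ (k, k'))"
proof -
  define B where "B = addrow (- t) q k A"
  have B: "B \<in> carrier_mat N N"
    using A by (simp add: B_def)
  have index_B: "B $$ (i, m) = (if i = q then - t * A $$ (k, m) + A $$ (i, m) else A $$ (i, m))"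
    if "i < N" "m < N" for i m
    using that A by (auto simp: B_def)
  have \<beta>_eq_k: "\<beta> m = k \<longleftrightarrow> m = k" for m
    using \<beta>k permutes_inj[OF \<beta>] by (metis injD)
  have "det A = det B"
    using A k q by (simp add: B_def det_addrow)
  also have "\<dots> = signof \<beta> * B $$ (\<beta> k', k')"
  proof (rule det_eq_unit_columns_but_one[OF B \<beta> k'])
    fix i m
    assume "i < N" "m < N" "m \<noteq> k'"
    then show "B $$ (i, m) = (if i = \<beta> m then 1 else 0)"
      using column_k[of i] column_k[OF k] unit[of i m] unit[OF k, of m] q \<beta>k \<beta>_eq_k[of m]
      by (cases "m = k") (auto simp: index_B)
  qed
  also have "B $$ (\<beta> k', k') = A $$ (q, k') - t * A $$ (k, k')"
    using q k' by (simp add: \<beta>k' index_B)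
  finally show ?thesis .
qed

subsection \<open>The determinant is multilinear in the matrices \<open>L\<^sup>j\<close>\<close>

definition block :: "nat \<Rightarrow> nat \<Rightarrow> var set" where
  "block n j = {(j, r, c) | r c. r < n \<and> c < 2}"

lemma deg_le_pl_minor:
  assumes "i < n choose 2"
  shows "deg_le v (if v \<in> block n j then 1 else 0) (pl_minor n i j)"
proof -
  obtain a b where ab: "row_pairs n ! i = (a, b)"
    by force
  have "a < b" "b < n"
    using row_pairs_nth_less[OF assms] ab by auto
  have deg: "deg_le v (if v \<in> block n j then 1 else 0) (mvar (j, r, d) * mvar (j, r', d') :: mpoly)"
    if "r < n" "r' < n" "r \<noteq> r'" "d < 2" "d' < 2" for r r' d d'
  proof -
    have "deg_le v ((if (j, r, d) = v then 1 else 0) + (if (j, r', d') = v then 1 else 0))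
        (mvar (j, r, d) * mvar (j, r', d') :: mpoly)"
      by (intro deg_le_mult deg_le_mvar)
    then show ?thesis
      by (rule deg_le_mono) (use that in \<open>auto simp: block_def\<close>)
  qed
  show ?thesis
    unfolding pl_minor_def ab Var_eq_mvar using \<open>a < b\<close> \<open>b < n\<close>
    by (simp add: deg_le_diff deg)
qed

lemma minor_submatrix_carrier: "minor_submatrix n colsel \<in> carrier_mat (n choose 2) (n choose 2)"
  by (simp add: minor_submatrix_def)

lemma sum_indicator_block_le:
  fixes N :: nat
  assumes inj: "inj_on colsel {..<N}"
  shows "(\<Sum>k = 0..<N. if v \<in> block n (colsel k) then 1 else 0 :: nat)
    \<le> (if v \<in> (\<Union>k<N. block n (colsel k)) then 1 else 0)"
proof -
  let ?K = "{0..<N} \<inter> {k. v \<in> block n (colsel k)}"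
  have "k = k'" if "k < N" "k' < N" "v \<in> block n (colsel k)" "v \<in> block n (colsel k')" for k k'
    using that inj by (auto simp: block_def inj_on_def)
  then have "card ?K \<le> Suc 0"
    by (subst card_le_Suc0_iff_eq) auto
  moreover have "?K = {}" if "v \<notin> (\<Union>k<N. block n (colsel k))"
    using that by auto
  ultimately show ?thesis
    by (auto simp: sum.If_cases)
qed

lemma deg_le_det_minor_submatrix:
  assumes inj: "inj_on colsel {..<n choose 2}"
  shows "deg_le v (if v \<in> (\<Union>k<n choose 2. block n (colsel k)) then 1 else 0) (det (minor_submatrix n colsel))"
proof -
  let ?N = "n choose 2"
  let ?d = "\<lambda>k. if v \<in> block n (colsel k) then 1 else (0::nat)"
  show ?thesis
    unfolding det_def'[OF minor_submatrix_carrier]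
  proof (rule deg_le_sum)
    fix p
    assume "p \<in> {p. p permutes {0..<?N}}"
    then have p: "p permutes {0..<?N}"
      by simp
    have "deg_le v (sum (?d \<circ> p) {0..<?N}) (\<Prod>i = 0..<?N. minor_submatrix n colsel $$ (i, p i))"
      using p by (intro deg_le_prod)
        (simp add: permutes_in_image minor_submatrix_def deg_le_pl_minor)
    moreover have "sum (?d \<circ> p) {0..<?N} = sum ?d {0..<?N}"
      using sum.permute[OF p, of ?d] by simp
    ultimately have "deg_le v (0 + sum ?d {0..<?N})
        (signof p * (\<Prod>i = 0..<?N. minor_submatrix n colsel $$ (i, p i)))"
      by (intro deg_le_mult deg_le_of_int) simp
    then show "deg_le v (if v \<in> (\<Union>k<?N. block n (colsel k)) then 1 else 0)
        (signof p * (\<Prod>i = 0..<?N. minor_submatrix n colsel $$ (i, p i)))"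
      by (rule deg_le_mono) (use sum_indicator_block_le[OF inj] in simp)
  qed
qed

definition minor2 :: "(nat \<Rightarrow> nat \<Rightarrow> 'a::comm_ring) \<Rightarrow> nat \<times> nat \<Rightarrow> 'a" where
  "minor2 L = (\<lambda>(a, b). L a 0 * L b 1 - L a 1 * L b 0)"

definition minor_matrix :: "nat \<Rightarrow> (nat \<Rightarrow> nat \<Rightarrow> nat \<Rightarrow> 'a::comm_ring) \<Rightarrow> 'a mat" where
  "minor_matrix n Ls = mat (n choose 2) (n choose 2) (\<lambda>(i, k). minor2 (Ls k) (row_pairs n ! i))"

lemma minor_matrix_carrier: "minor_matrix n Ls \<in> carrier_mat (n choose 2) (n choose 2)"
  by (simp add: minor_matrix_def)

lemma index_minor_matrix:
  "i < n choose 2 \<Longrightarrow> k < n choose 2 \<Longrightarrow> minor_matrix n Ls $$ (i, k) = minor2 (Ls k) (row_pairs n ! i)"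
  by (simp add: minor_matrix_def)

definition block_subst :: "(nat \<Rightarrow> nat) \<Rightarrow> nat \<Rightarrow> (nat \<Rightarrow> nat \<Rightarrow> nat \<Rightarrow> mpoly) \<Rightarrow> var \<Rightarrow> mpoly" where
  "block_subst colsel N Ls =
     (\<lambda>(j, r, c). if j \<in> colsel ` {..<N} then Ls (the_inv_into {..<N} colsel j) r c else 0)"

lemma block_subst_apply:
  "inj_on colsel {..<N} \<Longrightarrow> k < N \<Longrightarrow> block_subst colsel N Ls (colsel k, r, c) = Ls k r c"
  by (simp add: block_subst_def the_inv_into_f_f)

lemma msubst_block_subst_det:
  assumes inj: "inj_on colsel {..<n choose 2}"
  shows "msubst (block_subst colsel (n choose 2) Ls) (det (minor_submatrix n colsel)) = det (minor_matrix n Ls)"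
proof -
  have "map_mat (msubst (block_subst colsel (n choose 2) Ls)) (minor_submatrix n colsel) = minor_matrix n Ls"
  proof (rule eq_matI)
    fix i k
    assume "i < dim_row (minor_matrix n Ls)" "k < dim_col (minor_matrix n Ls)"
    then have ik: "i < n choose 2" "k < n choose 2"
      by (simp_all add: minor_matrix_def)
    obtain a b where ab: "row_pairs n ! i = (a, b)"
      by force
    show "map_mat (msubst (block_subst colsel (n choose 2) Ls)) (minor_submatrix n colsel) $$ (i, k) =
        minor_matrix n Ls $$ (i, k)"
      using ik inj
      by (simp add: minor_submatrix_def index_minor_matrix pl_minor_def minor2_def ab Var_eq_mvar
          msubst_diff msubst_mult block_subst_apply)
  qed (simp_all add: minor_submatrix_def minor_matrix_def)
  then show ?thesis
    by (simp add: msubst_det)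
qed

lemma mvars_block_subst:
  assumes "\<And>k r c. k < N \<Longrightarrow> mvars (Ls k r c) \<subseteq> {(colsel k, r, c)} \<inter> K" "inj_on colsel {..<N}"
  shows "\<forall>v. mvars (block_subst colsel N Ls v) \<subseteq> {v} \<inter> K"
proof
  fix v :: var
  obtain j r c where v: "v = (j, r, c)"
    by (cases v) auto
  show "mvars (block_subst colsel N Ls v) \<subseteq> {v} \<inter> K"
  proof (cases "j \<in> colsel ` {..<N}")
    case True
    then obtain k where "k < N" "j = colsel k"
      by auto
    then show ?thesis
      using assms by (simp add: v block_subst_apply)
  qed (simp add: block_subst_def v)
qed

definition unit_block :: "nat \<times> nat \<Rightarrow> nat \<Rightarrow> nat \<Rightarrow> 'a::zero_neq_one" where
  "unit_block R r c = (if (r, c) = (fst R, 0) \<or> (r, c) = (snd R, 1) then 1 else 0)"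

definition unit_block_plus :: "nat \<times> nat \<Rightarrow> nat \<Rightarrow> 'a \<Rightarrow> nat \<Rightarrow> nat \<Rightarrow> 'a::{zero_neq_one, plus}" where
  "unit_block_plus R c t r d = unit_block R r d + (if (r, d) = (c, 1) then t else 0)"

lemma mvars_unit_block [simp]: "mvars (unit_block R r c) = {}"
  by (simp add: unit_block_def)

lemma mvars_unit_block_plus: "mvars (unit_block_plus R c (mvar v) r d) \<subseteq> (if (r, d) = (c, 1) then {v} else {})"
  using mvars_add[of "unit_block R r d" "if (r, d) = (c, 1) then mvar v else 0"]
  unfolding unit_block_plus_def by (auto split: if_splits)

lemma minor2_unit_block:
  "a \<noteq> b \<Longrightarrow> minor2 (unit_block (a, b) :: nat \<Rightarrow> nat \<Rightarrow> 'a::comm_ring_1) (x, w) =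
    (if (x, w) = (a, b) then 1 else if (x, w) = (b, a) then -1 else 0)"
  by (auto simp: minor2_def unit_block_def)

lemma minor2_unit_block_plus:
  "distinct [a, b, c] \<Longrightarrow> minor2 (unit_block_plus (a, b) c t) (x, w) =
    minor2 (unit_block (a, b)) (x, w) + (if (x, w) = (a, c) then t else if (x, w) = (c, a) then - t else 0 :: 'a::comm_ring_1)"
  by (auto simp: minor2_def unit_block_plus_def unit_block_def)

lemma minor_matrix_unit_column:
  assumes "i < n choose 2" "j < n choose 2" "Ls m = unit_block (row_pairs n ! j)" "m < n choose 2"
  shows "minor_matrix n Ls $$ (i, m) = (if i = j then 1 else 0 :: 'a::comm_ring_1)"
proof -
  obtain a b x w where ab: "row_pairs n ! j = (a, b)" and xw: "row_pairs n ! i = (x, w)"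
    by force
  have "a < b" "x < w"
    using row_pairs_nth_less assms(1,2) ab xw by fastforce+
  moreover have "(x, w) = (a, b) \<longleftrightarrow> i = j"
    using row_pairs_nth_eq_iff[OF assms(1,2)] ab xw by simp
  ultimately show ?thesis
    using assms by (simp add: index_minor_matrix ab xw minor2_unit_block)
qed

lemma minor_matrix_unit_plus_column:
  assumes i: "i < n choose 2" and k: "k < n choose 2" "row_pairs n ! k = (a, b)"
    and q: "q < n choose 2" "row_pairs n ! q = (min a c, max a c)" and "c \<noteq> a" "c \<noteq> b"
    and Lk: "Ls k = unit_block_plus (a, b) c t"
  shows "minor_matrix n Ls $$ (i, k) =
    (if i = k then 1 else if i = q then (if a < c then t else - t) else 0 :: 'a::comm_ring_1)"
proof -
  obtain x w where xw: "row_pairs n ! i = (x, w)"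
    by force
  have "a < b" "x < w"
    using row_pairs_nth_less i k xw by fastforce+
  have "(x, w) = (a, b) \<longleftrightarrow> i = k" "(x, w) = (min a c, max a c) \<longleftrightarrow> i = q"
    using row_pairs_nth_eq_iff[OF i k(1)] row_pairs_nth_eq_iff[OF i q(1)] xw k(2) q(2) by auto
  moreover have "minor2 (Ls k) (x, w) = minor2 (unit_block (a, b)) (x, w) +
      (if (x, w) = (a, c) then t else if (x, w) = (c, a) then - t else 0)"
    using \<open>a < b\<close> \<open>c \<noteq> a\<close> \<open>c \<noteq> b\<close> unfolding Lk by (intro minor2_unit_block_plus) auto
  ultimately show ?thesis
    using i k \<open>x < w\<close> \<open>a < b\<close> \<open>c \<noteq> a\<close> \<open>c \<noteq> b\<close>
    by (auto simp: index_minor_matrix xw minor2_unit_block min_def max_def split: if_splits)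
qed

lemma of_int_sign_neq_0: "(of_int (sign p) :: 'a::ring_1) \<noteq> 0"
  by (simp add: sign_def)

subsection \<open>Linked entries\<close>

text \<open>All selected matrices except \<open>L\<^sup>k\<close> become unit blocks, permuted so that the matrix of
  minors is a permutation matrix outside column \<open>k\<close>; the determinant is then \<open>\<plusminus>\<close> the minor
  of \<open>L\<^sup>k\<close> on the rows \<open>a, b\<close>.\<close>

lemma linked_within_block:
  assumes inj: "inj_on colsel {..<n choose 2}" and k: "k < n choose 2"
    and ab: "a < b" "b < n" and cc: "c < 2" "c' < 2"
  shows "linked (det (minor_submatrix n colsel)) (colsel k, a, c) (colsel k, b, c')"
proof -
  let ?N = "n choose 2"
  define y where "y = (colsel k, a, c)"
  define z where "z = (colsel k, b, c')"
  obtain q where q: "q < ?N" "row_pairs n ! q = (a, b)"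
    using row_pairs_index[OF ab] .
  define \<beta> where "\<beta> = Transposition.transpose k q"
  define Lw :: "nat \<Rightarrow> nat \<Rightarrow> mpoly" where "Lw r d = (if r = a then (if d = c then mvar y else 1)
    else if r = b then (if d = c' then mvar z else 1) else 0)" for r d
  define Ls where "Ls m = (if m = k then Lw else unit_block (row_pairs n ! \<beta> m))" for m
  define \<phi> where "\<phi> = block_subst colsel ?N Ls"
  have \<beta>: "\<beta> permutes {0..<?N}"
    unfolding \<beta>_def using k q by (intro permutes_swap_id) auto
  have "msubst \<phi> (det (minor_submatrix n colsel)) = det (minor_matrix n Ls)"
    unfolding \<phi>_def using inj by (rule msubst_block_subst_det)
  also have "\<dots> = signof \<beta> * minor_matrix n Ls $$ (\<beta> k, k)"
  proof (rule det_eq_unit_columns_but_one[OF minor_matrix_carrier \<beta> k])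
    fix i m
    assume "i < ?N" "m < ?N" "m \<noteq> k"
    then show "minor_matrix n Ls $$ (i, m) = (if i = \<beta> m then 1 else 0)"
      using permutes_in_image[OF \<beta>] by (intro minor_matrix_unit_column) (auto simp: Ls_def)
  qed
  also have "minor_matrix n Ls $$ (\<beta> k, k) = minor2 Lw (a, b)"
    using k q by (simp add: \<beta>_def index_minor_matrix Ls_def)
  finally have det: "msubst \<phi> (det (minor_submatrix n colsel)) = mconst (of_int (sign \<beta>)) * minor2 Lw (a, b)"
    by (simp add: of_int_eq_mconst)
  have yz: "y \<noteq> z"
    using ab by (simp add: y_def z_def)
  have vars: "\<forall>v. mvars (\<phi> v) \<subseteq> {v} \<inter> {y, z}"
    unfolding \<phi>_def using inj
    by (intro mvars_block_subst) (auto simp: Ls_def Lw_def y_def z_def)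
  note linked = linkedI[OF yz vars det of_int_sign_neq_0]
  consider "c = 0" "c' = 0" | "c = 0" "c' = 1" | "c = 1" "c' = 0" | "c = 1" "c' = 1"
    using cc by fastforce
  then have "linked (det (minor_submatrix n colsel)) y z"
  proof cases
    case 1
    show ?thesis
      by (rule linked[where e = 0 and f = 1 and g = "-1" and h = 0])
        (use 1 ab in \<open>simp_all add: minor2_def Lw_def mconst_uminus\<close>)
  next
    case 2
    show ?thesis
      by (rule linked[where e = "-1" and f = 0 and g = 0 and h = 1])
        (use 2 ab in \<open>simp_all add: minor2_def Lw_def mconst_uminus\<close>)
  next
    case 3
    show ?thesis
      by (rule linked[where e = 1 and f = 0 and g = 0 and h = "-1"])
        (use 3 ab in \<open>simp_all add: minor2_def Lw_def mconst_uminus\<close>)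
  next
    case 4
    show ?thesis
      by (rule linked[where e = 0 and f = "-1" and g = 1 and h = 0])
        (use 4 ab in \<open>simp_all add: minor2_def Lw_def mconst_uminus\<close>)
  qed
  then show ?thesis
    by (simp add: y_def z_def)
qed

lemma det_minor_matrix_unit_blocks_plus:
  fixes a c :: nat and y z :: "'a::comm_ring_1"
  defines "s \<equiv> if a < c then 1 else - 1 :: 'a"
  assumes k: "k < n choose 2" "row_pairs n ! k = (a, b)" and k': "k' < n choose 2" "k \<noteq> k'"
    and q: "q < n choose 2" "row_pairs n ! q = (min a c, max a c)" and c: "c \<noteq> a" "c \<noteq> b"
    and Ls: "Ls k = unit_block_plus (a, b) c y" "Ls k' = unit_block_plus (a, c) b z"
      "\<And>m. m \<noteq> k \<Longrightarrow> m \<noteq> k' \<Longrightarrow> Ls m = unit_block (row_pairs n ! Transposition.transpose k' q m)"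
  shows "det (minor_matrix n Ls) = signof (Transposition.transpose k' q) * (s - s * y * z)"
proof -
  let ?N = "n choose 2"
  let ?\<beta> = "Transposition.transpose k' q"
  have "a < b"
    using row_pairs_nth_less[OF k(1)] k(2) by auto
  have "q \<noteq> k"
    using q k(2) c by (auto simp: min_def max_def split: if_splits)
  have \<beta>: "?\<beta> permutes {0..<?N}"
    using k' q by (intro permutes_swap_id) auto
  have "minor2 (unit_block_plus (a, c) b z) (x, w) = minor2 (unit_block (a, c)) (x, w) +
      (if (x, w) = (a, b) then z else if (x, w) = (b, a) then - z else 0)" for x w
    using \<open>a < b\<close> c by (intro minor2_unit_block_plus) auto
  then have "minor_matrix n Ls $$ (k, k') = z" "minor_matrix n Ls $$ (q, k') = s"
    using k k' q \<open>a < b\<close> c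
    by (simp_all add: index_minor_matrix Ls(2) minor2_unit_block)
      (auto simp: s_def min_def max_def)
  moreover have "det (minor_matrix n Ls) =
      signof ?\<beta> * (minor_matrix n Ls $$ (q, k') - s * y * minor_matrix n Ls $$ (k, k'))"
  proof (rule det_eq_unit_columns_but_two[OF minor_matrix_carrier \<beta> k(1) k'(1) q(1) \<open>q \<noteq> k\<close>])
    show "?\<beta> k = k" "?\<beta> k' = q"
      using k'(2) \<open>q \<noteq> k\<close> by simp_all
    show "minor_matrix n Ls $$ (i, k) = (if i = k then 1 else if i = q then s * y else 0)"
      if "i < ?N" for i
      using minor_matrix_unit_plus_column[OF that k q c, of Ls y] Ls(1) by (simp add: s_def)
    fix i m
    assume "i < ?N" "m < ?N" "m \<noteq> k" "m \<noteq> k'"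
    then show "minor_matrix n Ls $$ (i, m) = (if i = ?\<beta> m then 1 else 0)"
      using permutes_in_image[OF \<beta>] by (intro minor_matrix_unit_column) (auto simp: Ls(3))
  qed
  ultimately show ?thesis
    by (simp add: algebra_simps)
qed

lemma linked_across_blocks:
  assumes inj: "inj_on colsel {..<n choose 2}" and n: "3 \<le> n"
    and k: "k < n choose 2" and k': "k' < n choose 2" and "k \<noteq> k'"
  shows "\<exists>y\<in>block n (colsel k). \<exists>z\<in>block n (colsel k'). linked (det (minor_submatrix n colsel)) y z"
proof -
  let ?N = "n choose 2"
  obtain a b where ab: "row_pairs n ! k = (a, b)"
    by force
  have "a < b" "b < n"
    using row_pairs_nth_less[OF k] ab by auto
  have "\<exists>c<3. c \<noteq> a \<and> c \<noteq> b"
    by presburger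
  then obtain c where "c < 3" "c \<noteq> a" "c \<noteq> b"
    by blast
  with n have c: "c < n" "c \<noteq> a" "c \<noteq> b"
    by linarith+
  have "min a c < max a c" "max a c < n"
    using c \<open>a < b\<close> \<open>b < n\<close> by (auto simp: min_def max_def)
  then obtain q where q: "q < ?N" "row_pairs n ! q = (min a c, max a c)"
    by (rule row_pairs_index)
  define \<beta> where "\<beta> = Transposition.transpose k' q"
  define y where "y = (colsel k, c, 1::nat)"
  define z where "z = (colsel k', b, 1::nat)"
  define Ls :: "nat \<Rightarrow> nat \<Rightarrow> nat \<Rightarrow> mpoly"
    where "Ls m = (if m = k then unit_block_plus (a, b) c (mvar y)
      else if m = k' then unit_block_plus (a, c) b (mvar z) else unit_block (row_pairs n ! \<beta> m))" for m
  define \<phi> where "\<phi> = block_subst colsel ?N Ls"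
  define s :: real where "s = (if a < c then 1 else - 1)"
  have s: "(if a < c then 1 else - 1 :: mpoly) = mconst s"
    by (simp add: s_def mconst_uminus)
  have "msubst \<phi> (det (minor_submatrix n colsel)) = det (minor_matrix n Ls)"
    unfolding \<phi>_def using inj by (rule msubst_block_subst_det)
  also have "\<dots> = signof \<beta> * ((if a < c then 1 else - 1) - (if a < c then 1 else - 1) * mvar y * mvar z)"
    unfolding \<beta>_def
    by (rule det_minor_matrix_unit_blocks_plus[OF k ab k' \<open>k \<noteq> k'\<close> q c(2,3)])
      (use \<open>k \<noteq> k'\<close> in \<open>simp_all add: Ls_def \<beta>_def\<close>)
  finally have det: "msubst \<phi> (det (minor_submatrix n colsel)) =
      mconst (of_int (sign \<beta>) * s) * (1 - mvar y * mvar z)"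
    unfolding s by (simp add: of_int_eq_mconst mconst_mult algebra_simps)
  have yz: "y \<noteq> z"
    using inj k k' \<open>k \<noteq> k'\<close> by (auto simp: y_def z_def inj_on_def)
  have "mvars (Ls m r d) \<subseteq> {(colsel m, r, d)} \<inter> {y, z}" if "m < ?N" for m r d
    using mvars_unit_block_plus[of "(a, b)" c y r d] mvars_unit_block_plus[of "(a, c)" b z r d] \<open>k \<noteq> k'\<close>
    by (auto simp: Ls_def y_def z_def split: if_splits)
  then have vars: "\<forall>v. mvars (\<phi> v) \<subseteq> {v} \<inter> {y, z}"
    unfolding \<phi>_def using inj by (rule mvars_block_subst)
  have "linked (det (minor_submatrix n colsel)) y z"
    by (rule linkedI[OF yz vars det, where e = 1 and f = 0 and g = 0 and h = "-1"])
      (simp_all add: s_def of_int_sign_neq_0 mconst_uminus)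
  moreover have "y \<in> block n (colsel k)" "z \<in> block n (colsel k')"
    using c \<open>b < n\<close> by (auto simp: block_def y_def z_def)
  ultimately show ?thesis
    by blast
qed

lemma linked_rtranclp_within_block:
  assumes inj: "inj_on colsel {..<n choose 2}" and n: "2 \<le> n" and k: "k < n choose 2"
    and v: "v \<in> block n (colsel k)"
  shows "(linked (det (minor_submatrix n colsel)))\<^sup>*\<^sup>* (colsel k, 0, 0) v"
proof -
  let ?R = "linked (det (minor_submatrix n colsel))"
  obtain r d where rd: "v = (colsel k, r, d)" "r < n" "d < 2"
    using v by (auto simp: block_def)
  have from_origin: "?R (colsel k, 0, 0) (colsel k, r', d')" if "0 < r'" "r' < n" "d' < 2" for r' d'
    using linked_within_block[OF inj k that(1,2)] that(3) by simp
  show ?thesis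
  proof (cases "r = 0")
    case False
    then show ?thesis
      using from_origin[of r d] rd by auto
  next
    case True
    have "?R (colsel k, 1, 0) (colsel k, 0, 1)"
      using linked_within_block[OF inj k, of 0 1 1 0] n by (auto intro: linked_sym)
    then have "?R\<^sup>*\<^sup>* (colsel k, 0, 0) (colsel k, 0, 1)"
      using from_origin[of 1 0] n by (auto intro: rtranclp.rtrancl_into_rtrancl)
    moreover have "d = 0 \<or> d = 1"
      using rd by auto
    ultimately show ?thesis
      using True rd by auto
  qed
qed

lemma linked_rtranclp_blocks:
  assumes inj: "inj_on colsel {..<n choose 2}" and n: "2 \<le> n"
    and v: "v \<in> (\<Union>k<n choose 2. block n (colsel k))"
  shows "(linked (det (minor_submatrix n colsel)))\<^sup>*\<^sup>* (colsel 0, 0, 0) v"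
proof -
  let ?R = "linked (det (minor_submatrix n colsel))"
  obtain k where k: "k < n choose 2" "v \<in> block n (colsel k)"
    using v by blast
  have N: "0 < n choose 2"
    using n by simp
  have "?R\<^sup>*\<^sup>* (colsel 0, 0, 0) (colsel k, 0, 0)"
  proof (cases "k = 0")
    case False
    with k have "3 \<le> n"
      by (cases "n = 2") (use n in auto)
    then obtain y z where y: "y \<in> block n (colsel 0)" and z: "z \<in> block n (colsel k)" and "?R y z"
      using linked_across_blocks[OF inj _ N k(1)] False by blast
    then have "?R\<^sup>*\<^sup>* (colsel 0, 0, 0) z"
      using linked_rtranclp_within_block[OF inj n N y] by (auto intro: rtranclp.rtrancl_into_rtrancl)
    then show ?thesis
      using linked_rtranclp_within_block[OF inj n k(1) z] by (auto intro: rtranclp_trans rtranclp_linked_sym)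
  qed simp
  then show ?thesis
    using linked_rtranclp_within_block[OF inj n k] by (auto intro: rtranclp_trans)
qed

theorem lemma3p2:
  fixes n q :: nat and colsel :: "nat \<Rightarrow> nat"
  assumes "n \<ge> 2"
    and "q \<ge> n choose 2"
    and "strict_mono_on {..<n choose 2} colsel"
    and "\<forall>k < n choose 2. colsel k < q"
  shows "irreducible (det (minor_submatrix n colsel))"
proof -
  let ?N = "n choose 2"
  let ?F = "det (minor_submatrix n colsel)"
  have inj: "inj_on colsel {..<?N}"
    using assms(3) by (rule strict_mono_on_imp_inj_on)
  have deg: "deg_le v (if v \<in> (\<Union>k<?N. block n (colsel k)) then 1 else 0) ?F" for v
    using inj by (rule deg_le_det_minor_submatrix)
  show ?thesis
  proof (rule irreducible_if_linked_connected)
    show "deg_le v 1 ?F" for v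
      using deg by (rule deg_le_mono) simp
    have "linked ?F (colsel 0, 0, 0) (colsel 0, 1, 0)"
      using assms(1) by (intro linked_within_block[OF inj]) auto
    then show "(colsel 0, 0, 0) \<in> mvars ?F"
      by (rule linked_imp_mvars)
    fix v
    assume "v \<in> mvars ?F"
    then have "\<not> deg_le v 0 ?F"
      by (simp add: deg_le_0_iff_notin_mvars)
    then have "v \<in> (\<Union>k<?N. block n (colsel k))"
      using deg[of v] by (auto split: if_splits)
    with inj assms(1) show "(linked ?F)\<^sup>*\<^sup>* (colsel 0, 0, 0) v"
      by (rule linked_rtranclp_blocks)
  qed
qed

end
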